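(* Let $K\subseteq\mathbb{R}^d$ be a compact, smooth $d$-manifold with boundary. For every $\lambda>0$ there exists $\rho_2=\rho_2(K,\lambda)>0$ such that if $x\in K$, $B(y,r)\subseteq K$ and $\|x-y\|\leq\lambda r$ for some $0<r<\rho_2$, then $\operatorname{conv}(\{x,y\})\subseteq K$.
   Context: $K\subseteq\mathbb{R}^d$ being a smooth $d$-manifold with boundary means: for every $x\in K$ there are open sets $O,U\subseteq\mathbb{R}^d$ with $x\in O$ and a diffeomorphism $\varphi:O\to U$ with $\varphi[O\cap K]=U\cap\mathbb{H}^d$, where $\mathbb{H}^d=[0,\infty)\times\mathbb{R}^{d-1}$. $B(y,r)$ is the open Euclidean ball; $\operatorname{conv}$ denotes convex hull. *)

theory Defs
  imports "HOL-Analysis.Analysis"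
begin

fun Ck_on :: "nat \<Rightarrow> 'a::euclidean_space set \<Rightarrow> ('a \<Rightarrow> 'b::euclidean_space) \<Rightarrow> bool" where
  "Ck_on 0 S f = continuous_on S f"
| "Ck_on (Suc k) S f = (f differentiable_on S \<and>
      (\<forall>v. Ck_on k S (\<lambda>x. frechet_derivative f (at x) v)))"

definition smooth_on :: "'a::euclidean_space set \<Rightarrow> ('a \<Rightarrow> 'b::euclidean_space) \<Rightarrow> bool" where
  "smooth_on S f \<longleftrightarrow> (\<forall>k. Ck_on k S f)"

definition diffeomorphism_between :: "('a::euclidean_space \<Rightarrow> 'a) \<Rightarrow> 'a set \<Rightarrow> 'a set \<Rightarrow> bool" where
  "diffeomorphism_between \<phi> V U \<longleftrightarrow> open V \<and> open U \<and> bij_betw \<phi> V U \<and>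
     smooth_on V \<phi> \<and> smooth_on U (inv_into V \<phi>)"

text \<open>Half space H^d = [0,\<infinity>) \<times> R^(d-1): first coordinate nonnegative.\<close>
definition half_space :: "(real^'n::{finite,wellorder}) set" where
  "half_space = {x. 0 \<le> x $ (LEAST i. True)}"

definition smooth_manifold_with_boundary :: "(real^'n::{finite,wellorder}) set \<Rightarrow> bool" where
  "smooth_manifold_with_boundary K \<longleftrightarrow>
     (\<forall>x\<in>K. \<exists>V U \<phi>. x \<in> V \<and> diffeomorphism_between \<phi> V U \<and>
        \<phi> ` (V \<inter> K) = U \<inter> half_space)"

end

theory Submission
  imports Defs
begin

(* Near a point p of K, the first coordinate of a chart exhibits K as a superlevel set {g \<ge> 0}
   of a C^1 function g with Dg(p) v = 1 for some v. On a small ball around p, g is uniformly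
   close to its linearization at p, so along any segment [x, y] it stays above the linear
   interpolation of g x and g y up to an error 2 \<epsilon> t (1 - t) |x - y|. If B(y, r) \<subseteq> K, then the
   point y - (r/2) v/|v| lies in K, which forces g y \<ge> r/(4|v|); since |x - y| \<le> \<lambda> r, this
   dominates the error term, so g \<ge> 0 on [x, y]. Compactness makes the radius uniform. *)

lemma C1_uniform_linearization:
  fixes g :: "'a::euclidean_space \<Rightarrow> 'b::real_normed_vector"
  assumes "open V" "p \<in> V" "\<epsilon> > 0"
    and der: "\<And>z. z \<in> V \<Longrightarrow> (g has_derivative g' z) (at z)"
    and cont: "\<And>w. continuous_on V (\<lambda>z. g' z w)"
  obtains \<delta> where "\<delta> > 0" "ball p \<delta> \<subseteq> V"
    "\<And>a b. a \<in> ball p \<delta> \<Longrightarrow> b \<in> ball p \<delta> \<Longrightarrow> norm (g b - g a - g' p (b - a)) \<le> \<epsilon> * norm (b - a)"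
proof -
  define G where "G z = Blinfun (g' z)" for z
  have G: "blinfun_apply (G z) = g' z" if "z \<in> V" for z
    using der[OF that] by (simp add: G_def has_derivative_bounded_linear bounded_linear_Blinfun_apply)
  have "continuous_on V G"
    by (rule continuous_on_blinfun_componentwise, rule continuous_on_eq[OF cont]) (simp add: G)
  then obtain \<delta>\<^sub>1 where "\<delta>\<^sub>1 > 0" and \<delta>\<^sub>1: "\<And>z. z \<in> V \<Longrightarrow> dist z p < \<delta>\<^sub>1 \<Longrightarrow> dist (G z) (G p) < \<epsilon>"
    using \<open>p \<in> V\<close> \<open>\<epsilon> > 0\<close> unfolding continuous_on_iff by blast
  obtain \<delta>\<^sub>2 where "\<delta>\<^sub>2 > 0" "ball p \<delta>\<^sub>2 \<subseteq> V"
    using \<open>open V\<close> \<open>p \<in> V\<close> openE by blast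
  define \<delta> where "\<delta> = min \<delta>\<^sub>1 \<delta>\<^sub>2"
  have sub: "ball p \<delta> \<subseteq> V" using \<open>ball p \<delta>\<^sub>2 \<subseteq> V\<close> by (auto simp: \<delta>_def)
  have bound: "onorm (g' z - g' p) \<le> \<epsilon>" if "z \<in> ball p \<delta>" for z
  proof -
    have "z \<in> V" "dist z p < \<delta>\<^sub>1" using that sub by (auto simp: \<delta>_def dist_commute)
    then have "norm (G z - G p) < \<epsilon>" using \<delta>\<^sub>1 by (simp add: dist_norm)
    then show ?thesis
      using \<open>z \<in> V\<close> \<open>p \<in> V\<close> by (simp add: norm_blinfun.rep_eq blinfun.diff_left[abs_def] fun_diff_def G)
  qed
  have der_within: "(g has_derivative g' z) (at z within ball p \<delta>)" if "z \<in> ball p \<delta>" for z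
    using der sub that by (blast intro: has_derivative_at_withinI)
  have "norm (g b - g a - g' p (b - a)) \<le> norm (b - a) * \<epsilon>"
    if "a \<in> ball p \<delta>" "b \<in> ball p \<delta>" for a b
  proof (rule differentiable_bound_linearization[OF _ der_within bound])
    show "a + t *\<^sub>R (b - a) \<in> ball p \<delta>" if "t \<in> {0..1}" for t
      using convexD_alt[OF convex_ball \<open>a \<in> ball p \<delta>\<close> \<open>b \<in> ball p \<delta>\<close>, of t] that
      by (simp add: algebra_simps)
    show "p \<in> ball p \<delta>" using \<open>\<delta>\<^sub>1 > 0\<close> \<open>\<delta>\<^sub>2 > 0\<close> by (simp add: \<delta>_def)
  qed
  then show ?thesis
    using that[of \<delta>] sub \<open>\<delta>\<^sub>1 > 0\<close> \<open>\<delta>\<^sub>2 > 0\<close> by (auto simp: \<delta>_def mult.commute)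
qed

lemma approx_linear_segment_lower_bound:
  fixes g :: "'a::real_normed_vector \<Rightarrow> real"
  assumes "linear L" "convex S" "x \<in> S" "y \<in> S" "0 \<le> t" "t \<le> 1"
    and approx: "\<And>a b. a \<in> S \<Longrightarrow> b \<in> S \<Longrightarrow> \<bar>g b - g a - L (b - a)\<bar> \<le> \<epsilon> * norm (b - a)"
  shows "(1 - t) * g x + t * g y - 2 * \<epsilon> * t * (1 - t) * norm (y - x) \<le> g ((1 - t) *\<^sub>R x + t *\<^sub>R y)"
proof -
  define z where "z = (1 - t) *\<^sub>R x + t *\<^sub>R y"
  have "z \<in> S" using convexD_alt[OF assms(2-4)] assms(5,6) by (simp add: z_def)
  have zx: "z - x = t *\<^sub>R (y - x)" and yz: "y - z = (1 - t) *\<^sub>R (y - x)"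
    by (simp_all add: z_def algebra_simps)
  have "g x + t * L (y - x) - \<epsilon> * t * norm (y - x) \<le> g z"
    using approx[OF \<open>x \<in> S\<close> \<open>z \<in> S\<close>] assms(5) by (simp add: zx linear_scale[OF \<open>linear L\<close>])
  moreover have "g y - (1 - t) * L (y - x) - \<epsilon> * (1 - t) * norm (y - x) \<le> g z"
    using approx[OF \<open>z \<in> S\<close> \<open>y \<in> S\<close>] assms(6) by (simp add: yz linear_scale[OF \<open>linear L\<close>])
  ultimately have "(1 - t) * (g x + t * L (y - x) - \<epsilon> * t * norm (y - x))
      + t * (g y - (1 - t) * L (y - x) - \<epsilon> * (1 - t) * norm (y - x)) \<le> (1 - t) * g z + t * g z"
    using assms(5,6) by (intro add_mono mult_left_mono) auto
  then have "(1 - t) * g x + t * g y - 2 * \<epsilon> * t * (1 - t) * norm (y - x) \<le> g z"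
    by (simp add: algebra_simps)
  then show ?thesis by (simp add: z_def)
qed

lemma approx_linear_nonneg_on_segment:
  fixes g :: "'a::real_normed_vector \<Rightarrow> real"
  assumes "linear L" "convex S" "x \<in> S" "y \<in> S" "0 \<le> \<epsilon>"
    and approx: "\<And>a b. a \<in> S \<Longrightarrow> b \<in> S \<Longrightarrow> \<bar>g b - g a - L (b - a)\<bar> \<le> \<epsilon> * norm (b - a)"
    and "0 \<le> g x" "2 * \<epsilon> * norm (y - x) \<le> g y"
  shows "z \<in> closed_segment x y \<Longrightarrow> 0 \<le> g z"
proof (clarsimp simp: closed_segment_def)
  fix t :: real assume t: "0 \<le> t" "t \<le> 1"
  have "2 * \<epsilon> * t * (1 - t) * norm (y - x) = (1 - t) * (t * (2 * \<epsilon> * norm (y - x)))"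
    by (simp add: algebra_simps)
  also have "\<dots> \<le> t * (2 * \<epsilon> * norm (y - x))"
    using t \<open>0 \<le> \<epsilon>\<close> by (intro mult_left_le_one_le) auto
  also have "\<dots> \<le> t * g y"
    using mult_left_mono[OF assms(8) \<open>0 \<le> t\<close>] .
  finally have "2 * \<epsilon> * t * (1 - t) * norm (y - x) \<le> t * g y" .
  moreover have "0 \<le> (1 - t) * g x" using t assms(7) by simp
  ultimately show "0 \<le> g ((1 - t) *\<^sub>R x + t *\<^sub>R y)"
    using approx_linear_segment_lower_bound[OF assms(1-4) t approx] by linarith
qed

lemma approx_linear_superlevel_set_contains_segment:
  fixes g :: "'a::real_normed_vector \<Rightarrow> real"
  assumes "linear L" "norm v = 1" "L v = c" "lam > 0" "0 \<le> \<epsilon>" and small: "8 * (1 + lam) * \<epsilon> \<le> c"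
    and K: "\<And>z. z \<in> ball p \<delta> \<Longrightarrow> z \<in> K \<longleftrightarrow> 0 \<le> g z"
    and approx: "\<And>a b. a \<in> ball p \<delta> \<Longrightarrow> b \<in> ball p \<delta> \<Longrightarrow> \<bar>g b - g a - L (b - a)\<bar> \<le> \<epsilon> * norm (b - a)"
    and "x \<in> K" "dist p x < \<delta>/4" "0 < r" "r < \<delta>/4" "lam * r < \<delta>/4"
    and "ball y r \<subseteq> K" "dist x y \<le> lam * r"
  shows "closed_segment x y \<subseteq> K"
proof -
  have "x \<in> ball p \<delta>" "y \<in> ball p \<delta>" and y: "dist p y < \<delta>/2"
    using \<open>dist p x < \<delta>/4\<close> \<open>0 < r\<close> \<open>r < \<delta>/4\<close> \<open>lam * r < \<delta>/4\<close> \<open>dist x y \<le> lam * r\<close>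
      dist_triangle[of p y x] by auto
  define w where "w = y - (r/2) *\<^sub>R v"
  have "norm (y - w) = r/2" using \<open>norm v = 1\<close> \<open>0 < r\<close> by (simp add: w_def)
  then have "w \<in> K" "w \<in> ball p \<delta>"
    using \<open>ball y r \<subseteq> K\<close> \<open>0 < r\<close> \<open>r < \<delta>/4\<close> y dist_triangle[of p w y] by (auto simp: dist_norm)
  have "L (y - w) = c * (r/2)"
    using linear_scale[OF \<open>linear L\<close>] \<open>L v = c\<close> by (simp add: w_def)
  then have height: "g w + c * (r/2) - \<epsilon> * (r/2) \<le> g y"
    using approx[OF \<open>w \<in> ball p \<delta>\<close> \<open>y \<in> ball p \<delta>\<close>] unfolding \<open>norm (y - w) = r/2\<close> by linarith
  have "8 * \<epsilon> + 8 * (lam * \<epsilon>) \<le> c" using small by (simp add: algebra_simps)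
  moreover have "0 \<le> lam * \<epsilon>" using \<open>lam > 0\<close> \<open>0 \<le> \<epsilon>\<close> by simp
  ultimately have "\<epsilon> \<le> c/2" "2 * \<epsilon> * lam \<le> c/4"
    using \<open>0 \<le> \<epsilon>\<close> by (simp_all add: mult.commute)
  then have "\<epsilon> * (r/2) \<le> c/2 * (r/2)" "2 * \<epsilon> * (lam * r) \<le> c/4 * r"
    using \<open>0 < r\<close> by (auto dest: mult_right_mono[of _ _ "r/2"] mult_right_mono[of _ _ r])
  moreover have "0 \<le> g w" using K \<open>w \<in> K\<close> \<open>w \<in> ball p \<delta>\<close> by blast
  moreover have "2 * \<epsilon> * norm (y - x) \<le> 2 * \<epsilon> * (lam * r)"
    using \<open>dist x y \<le> lam * r\<close> \<open>0 \<le> \<epsilon>\<close> by (simp add: dist_norm norm_minus_commute mult_left_mono)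
  ultimately have "2 * \<epsilon> * norm (y - x) \<le> g y"
    using height by linarith
  moreover have "0 \<le> g x" using K \<open>x \<in> K\<close> \<open>x \<in> ball p \<delta>\<close> by blast
  ultimately have "0 \<le> g z" if "z \<in> closed_segment x y" for z
    using approx_linear_nonneg_on_segment[OF \<open>linear L\<close> convex_ball \<open>x \<in> ball p \<delta>\<close> \<open>y \<in> ball p \<delta>\<close>
        \<open>0 \<le> \<epsilon>\<close> approx] that by blast
  moreover have "closed_segment x y \<subseteq> ball p \<delta>"
    using closed_segment_subset[OF \<open>x \<in> ball p \<delta>\<close> \<open>y \<in> ball p \<delta>\<close> convex_ball] .
  ultimately show ?thesis using K by blast
qed

lemma C1_superlevel_set_locally_contains_segments:
  fixes g :: "'a::euclidean_space \<Rightarrow> real"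
  assumes "open V" "p \<in> V" "lam > 0"
    and K: "\<And>z. z \<in> V \<Longrightarrow> z \<in> K \<longleftrightarrow> 0 \<le> g z"
    and der: "\<And>z. z \<in> V \<Longrightarrow> (g has_derivative g' z) (at z)"
    and cont: "\<And>w. continuous_on V (\<lambda>z. g' z w)"
    and "g' p v = 1"
  shows "\<exists>\<delta>>0. \<exists>\<rho>>0. \<forall>x\<in>K \<inter> ball p \<delta>. \<forall>r. 0 < r \<longrightarrow> r < \<rho> \<longrightarrow>
           (\<forall>y. ball y r \<subseteq> K \<longrightarrow> dist x y \<le> lam * r \<longrightarrow> closed_segment x y \<subseteq> K)"
proof -
  have "linear (g' p)" using der[OF \<open>p \<in> V\<close>] has_derivative_linear by blast
  then have "v \<noteq> 0" using \<open>g' p v = 1\<close> linear_0 by force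
  define c where "c = 1 / norm v"
  have "c > 0" "norm (sgn v) = 1" "g' p (sgn v) = c"
    using \<open>v \<noteq> 0\<close> \<open>g' p v = 1\<close> linear_scale[OF \<open>linear (g' p)\<close>] by (simp_all add: c_def sgn_div_norm divide_inverse)
  define \<epsilon> where "\<epsilon> = c / (8 * (1 + lam))"
  have "\<epsilon> > 0" "8 * (1 + lam) * \<epsilon> \<le> c" using \<open>c > 0\<close> \<open>lam > 0\<close> by (simp_all add: \<epsilon>_def)
  obtain \<delta> where "\<delta> > 0" and "ball p \<delta> \<subseteq> V"
    and approx: "\<And>a b. a \<in> ball p \<delta> \<Longrightarrow> b \<in> ball p \<delta> \<Longrightarrow> \<bar>g b - g a - g' p (b - a)\<bar> \<le> \<epsilon> * norm (b - a)"
    using C1_uniform_linearization[OF \<open>open V\<close> \<open>p \<in> V\<close> \<open>\<epsilon> > 0\<close> der cont] by (metis real_norm_def)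
  have "closed_segment x y \<subseteq> K"
    if "x \<in> K \<inter> ball p (\<delta>/4)" "0 < r" "r < min (\<delta>/4) (\<delta>/(4*lam))" "ball y r \<subseteq> K" "dist x y \<le> lam * r"
    for x r y
  proof (rule approx_linear_superlevel_set_contains_segment
      [OF \<open>linear (g' p)\<close> \<open>norm (sgn v) = 1\<close> \<open>g' p (sgn v) = c\<close> \<open>lam > 0\<close> _ \<open>8 * (1 + lam) * \<epsilon> \<le> c\<close> _ approx,
        where x = x and y = y and r = r])
    show "lam * r < \<delta>/4" using that(3) \<open>lam > 0\<close> by (simp add: field_simps)
  qed (use that K \<open>ball p \<delta> \<subseteq> V\<close> \<open>\<epsilon> > 0\<close> in auto)
  then show ?thesis
    using \<open>\<delta> > 0\<close> \<open>lam > 0\<close> by (intro exI[of _ "\<delta>/4"] conjI exI[of _ "min (\<delta>/4) (\<delta>/(4*lam))"]) auto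
qed

lemma compact_uniform_radius:
  fixes K :: "'a::metric_space set" and P :: "'a \<Rightarrow> real \<Rightarrow> bool"
  assumes "compact K"
    and local: "\<And>p. p \<in> K \<Longrightarrow> \<exists>\<delta>>0. \<exists>\<rho>>0. \<forall>x\<in>K \<inter> ball p \<delta>. \<forall>r. 0 < r \<longrightarrow> r < \<rho> \<longrightarrow> P x r"
  shows "\<exists>\<rho>>0. \<forall>x\<in>K. \<forall>r. 0 < r \<longrightarrow> r < \<rho> \<longrightarrow> P x r"
proof -
  have "\<forall>p\<in>K. \<exists>\<delta>>0. \<forall>\<^sub>F r in at_right 0. \<forall>x\<in>K \<inter> ball p \<delta>. P x r"
    using local by (fastforce simp: eventually_at_right_field)
  then obtain \<delta> where \<delta>: "\<And>p. p \<in> K \<Longrightarrow> \<delta> p > 0 \<and> (\<forall>\<^sub>F r in at_right 0. \<forall>x\<in>K \<inter> ball p (\<delta> p). P x r)"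
    by metis
  obtain F where "F \<subseteq> K" "finite F" and cover: "K \<subseteq> (\<Union>p\<in>F. ball p (\<delta> p))"
    by (rule compactE_image[OF assms(1), of K "\<lambda>p. ball p (\<delta> p)"]) (use \<delta> in force)+
  have "\<forall>\<^sub>F r in at_right 0. \<forall>p\<in>F. \<forall>x\<in>K \<inter> ball p (\<delta> p). P x r"
    using \<open>finite F\<close> by (rule eventually_ball_finite) (use \<delta> \<open>F \<subseteq> K\<close> in blast)
  then have "\<forall>\<^sub>F r in at_right 0. \<forall>x\<in>K. P x r"
    by (rule eventually_mono) (use cover in blast)
  then show ?thesis by (auto simp: eventually_at_right_field)
qed

lemma smooth_on_has_derivative:
  assumes "smooth_on S f" "open S" "z \<in> S"
  shows "(f has_derivative frechet_derivative f (at z)) (at z)"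
proof -
  have "Ck_on (Suc 0) S f" using assms(1) by (simp only: smooth_on_def)
  then show ?thesis
    using assms(2,3) by (auto simp: differentiable_on_eq_differentiable_at frechet_derivative_works)
qed

lemma smooth_on_continuous_derivative:
  assumes "smooth_on S f"
  shows "continuous_on S (\<lambda>z. frechet_derivative f (at z) w)"
proof -
  have "Ck_on (Suc 0) S f" using assms by (simp only: smooth_on_def)
  then show ?thesis by simp
qed

lemma diffeomorphism_between_surj_derivative:
  assumes "diffeomorphism_between \<phi> V U" "p \<in> V"
  shows "surj (frechet_derivative \<phi> (at p))"
proof -
  define \<psi> where "\<psi> = inv_into V \<phi>"
  have "open U" "smooth_on U \<psi>" and \<phi>: "smooth_on V \<phi>" "open V"
    using assms(1) by (simp_all add: diffeomorphism_between_def \<psi>_def)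
  have "\<phi> p \<in> U" "\<psi> (\<phi> p) = p" and \<phi>\<psi>: "\<And>u. u \<in> U \<Longrightarrow> \<phi> (\<psi> u) = u"
    using assms by (auto simp: diffeomorphism_between_def bij_betw_def \<psi>_def f_inv_into_f)
  define D where "D = frechet_derivative \<phi> (at p) \<circ> frechet_derivative \<psi> (at (\<phi> p))"
  have "((\<phi> \<circ> \<psi>) has_derivative D) (at (\<phi> p))"
    using diff_chain_at[OF smooth_on_has_derivative[OF \<open>smooth_on U \<psi>\<close> \<open>open U\<close> \<open>\<phi> p \<in> U\<close>]]
      smooth_on_has_derivative[OF \<phi> \<open>p \<in> V\<close>] \<open>\<psi> (\<phi> p) = p\<close> by (simp add: D_def)
  then have "(id has_derivative D) (at (\<phi> p))"
    by (rule has_derivative_transform_within_open[OF _ \<open>open U\<close> \<open>\<phi> p \<in> U\<close>]) (simp add: \<phi>\<psi>)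
  then have "D = id"
    using has_derivative_unique has_derivative_id by blast
  then show ?thesis
    unfolding D_def by (metis comp_apply id_apply surjI)
qed

lemma chart_mem_iff:
  assumes "diffeomorphism_between \<phi> V U" "\<phi> ` (V \<inter> K) = U \<inter> half_space" "z \<in> V"
  shows "z \<in> K \<longleftrightarrow> 0 \<le> \<phi> z $ (LEAST i. True)"
proof -
  have "inj_on \<phi> V" "\<phi> ` V = U" using assms(1) by (auto simp: diffeomorphism_between_def bij_betw_def)
  then have "z \<in> K \<longleftrightarrow> \<phi> z \<in> \<phi> ` (V \<inter> K)" using assms(3) by (auto dest: inj_onD)
  also have "\<dots> \<longleftrightarrow> 0 \<le> \<phi> z $ (LEAST i. True)"
    using assms(2,3) \<open>\<phi> ` V = U\<close> by (auto simp: half_space_def)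
  finally show ?thesis .
qed

lemma smooth_manifold_with_boundary_locally_contains_segments:
  fixes K :: "(real^'n::{finite,wellorder}) set"
  assumes "smooth_manifold_with_boundary K" "p \<in> K" "lam > 0"
  shows "\<exists>\<delta>>0. \<exists>\<rho>>0. \<forall>x\<in>K \<inter> ball p \<delta>. \<forall>r. 0 < r \<longrightarrow> r < \<rho> \<longrightarrow>
           (\<forall>y. ball y r \<subseteq> K \<longrightarrow> dist x y \<le> lam * r \<longrightarrow> closed_segment x y \<subseteq> K)"
proof -
  obtain V U \<phi> where "p \<in> V" and \<phi>: "diffeomorphism_between \<phi> V U" "\<phi> ` (V \<inter> K) = U \<inter> half_space"
    using assms(1,2) unfolding smooth_manifold_with_boundary_def by blast
  have "open V" "smooth_on V \<phi>" using \<phi>(1) by (simp_all add: diffeomorphism_between_def)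
  define i where "i = (LEAST i::'n. True)"
  obtain v where v: "frechet_derivative \<phi> (at p) v = axis i 1"
    using diffeomorphism_between_surj_derivative[OF \<phi>(1) \<open>p \<in> V\<close>] by (metis surjD)
  show ?thesis
  proof (rule C1_superlevel_set_locally_contains_segments
      [where g = "\<lambda>z. \<phi> z $ i" and g' = "\<lambda>z u. frechet_derivative \<phi> (at z) u $ i" and v = v])
    show "z \<in> K \<longleftrightarrow> 0 \<le> \<phi> z $ i" if "z \<in> V" for z
      using chart_mem_iff[OF \<phi> that] by (simp add: i_def)
    show "((\<lambda>z. \<phi> z $ i) has_derivative (\<lambda>u. frechet_derivative \<phi> (at z) u $ i)) (at z)"
      if "z \<in> V" for z
      using smooth_on_has_derivative[OF \<open>smooth_on V \<phi>\<close> \<open>open V\<close> that]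
      by (rule bounded_linear.has_derivative[OF bounded_linear_vec_nth])
    show "continuous_on V (\<lambda>z. frechet_derivative \<phi> (at z) w $ i)" for w
      using smooth_on_continuous_derivative[OF \<open>smooth_on V \<phi>\<close>] by (rule continuous_on_component)
  qed (use \<open>open V\<close> \<open>p \<in> V\<close> assms(3) v in auto)
qed

theorem lemma3p7:
  fixes K :: "(real^'n::{finite,wellorder}) set" and lam :: real
  assumes "compact K" and "smooth_manifold_with_boundary K" and "lam > 0"
  shows "\<exists>rho2 > 0. \<forall>x y r. x \<in> K \<longrightarrow> ball y r \<subseteq> K \<longrightarrow> dist x y \<le> lam * r
            \<longrightarrow> 0 < r \<longrightarrow> r < rho2 \<longrightarrow> convex hull {x, y} \<subseteq> K"
proof -
  obtain \<rho> where "\<rho> > 0" and "\<forall>x\<in>K. \<forall>r. 0 < r \<longrightarrow> r < \<rho> \<longrightarrow>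
      (\<forall>y. ball y r \<subseteq> K \<longrightarrow> dist x y \<le> lam * r \<longrightarrow> closed_segment x y \<subseteq> K)"
    using compact_uniform_radius[OF assms(1)
        smooth_manifold_with_boundary_locally_contains_segments[OF assms(2) _ assms(3)]] by blast
  then show ?thesis unfolding segment_convex_hull by blast
qed

end
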